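(* Let $B$ be a finite-dimensional abelian Lie algebra over a field $\mathbb{K}$ of characteristic zero and let $w\colon B\times B\to B^*$ be a cyclic $2$-cocycle. Then $(T^*_wB)^2=\mathrm{span}\langle w(b,b'):b,b'\in B\rangle$ and $Z(T^*_wB)=\mathrm{rad}\,w\oplus B^*$. Hence $T^*_wB$ is $2$-step nilpotent if and only if $w\neq0$. Moreover the following are equivalent: (a) $(T^*_wB,q_B)$ is reduced; (b) $w$ is non-degenerate; (c) $B^*=\mathrm{span}\langle w(b,b'):b,b'\in B\rangle$.
   Context: For a bilinear map $w\colon B\times B\to B^*$: $\mathrm{rad}\,w=\{b\in B:w(b,\cdot)=0\}$ and $w$ is non-degenerate if $\mathrm{rad}\,w=0$; $w$ is cyclic if $w(a,b)(c)=w(c,a)(b)=w(b,c)(a)$; $w$ is a $2$-cocycle (coadjoint coefficients) if $w$ is skew-symmetric and $\sum_{\mathrm{cyc}}w([a,b],c)=\sum_{\mathrm{cyc}}\mathrm{ad}^*(a)w(b,c)$, $\mathrm{ad}^*(a)(\beta)(a')=-\beta([a,a'])$. The $T^*$-extension $T^*_wB$ is $B\oplus B^*$ with bracket $[b+\beta,b'+\beta']=[b,b']_B+w(b,b')+\mathrm{ad}^*(b)(\beta')-\mathrm{ad}^*(b')(\beta)$ (here, $B$ abelian, simply $w(b,b')$) and form $q_B(b+\beta,b'+\beta')=\beta(b')+\beta'(b)$. A Lie algebra $L$ is reduced if $Z(L)\subseteq[L,L]$; $2$-step nilpotent means $[L,[L,L]]=0\ne[L,L]$. *)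

theory Defs
  imports Main "HOL.Vector_Spaces" "HOL-Library.Function_Algebras" "HOL-Library.Product_Plus"
begin

text \<open>A bilinear map
  w : B \<times> B \<rightarrow> B* is a curried function w a b c = w(a,b)(c).  A Lie bracket on B is a
  function br :: 'b \<Rightarrow> 'b \<Rightarrow> 'b (for abelian B: br = (\<lambda>_ _. 0)).\<close>

definition dual_space :: "('k::field \<Rightarrow> 'b::ab_group_add \<Rightarrow> 'b) \<Rightarrow> ('b \<Rightarrow> 'k) set" where
  "dual_space scale = {f. Vector_Spaces.linear scale (*) f}"

definition fscale :: "'k::field \<Rightarrow> ('b \<Rightarrow> 'k) \<Rightarrow> ('b \<Rightarrow> 'k)" where
  "fscale c f = (\<lambda>x. c * f x)"

definition pscale :: "('k::field \<Rightarrow> 'b::ab_group_add \<Rightarrow> 'b) \<Rightarrow> 'k \<Rightarrow> 'b \<times> ('b \<Rightarrow> 'k) \<Rightarrow> 'b \<times> ('b \<Rightarrow> 'k)" where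
  "pscale scale c p = (scale c (fst p), fscale c (snd p))"

definition bilinear_dual :: "('k::field \<Rightarrow> 'b::ab_group_add \<Rightarrow> 'b) \<Rightarrow> ('b \<Rightarrow> 'b \<Rightarrow> 'b \<Rightarrow> 'k) \<Rightarrow> bool" where
  "bilinear_dual scale w \<longleftrightarrow>
     (\<forall>b c. Vector_Spaces.linear scale (*) (\<lambda>a. w a b c)) \<and>
     (\<forall>a c. Vector_Spaces.linear scale (*) (\<lambda>b. w a b c)) \<and>
     (\<forall>a b. w a b \<in> dual_space scale)"

definition rad :: "('b::zero \<Rightarrow> 'b \<Rightarrow> 'b \<Rightarrow> 'k::zero) \<Rightarrow> 'b set" where
  "rad w = {b. \<forall>b'. w b b' = 0}"

definition nondegenerate :: "('b::zero \<Rightarrow> 'b \<Rightarrow> 'b \<Rightarrow> 'k::zero) \<Rightarrow> bool" where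
  "nondegenerate w \<longleftrightarrow> rad w = {0}"

definition cyclic :: "('b \<Rightarrow> 'b \<Rightarrow> 'b \<Rightarrow> 'k) \<Rightarrow> bool" where
  "cyclic w \<longleftrightarrow> (\<forall>a b c. w a b c = w c a b \<and> w c a b = w b c a)"

definition ad_star :: "('b \<Rightarrow> 'b \<Rightarrow> 'b) \<Rightarrow> 'b \<Rightarrow> ('b \<Rightarrow> 'k::ab_group_add) \<Rightarrow> ('b \<Rightarrow> 'k)" where
  "ad_star br a \<beta> = (\<lambda>a'. - \<beta> (br a a'))"

definition cocycle2 :: "('b \<Rightarrow> 'b \<Rightarrow> 'b) \<Rightarrow> ('b \<Rightarrow> 'b \<Rightarrow> 'b \<Rightarrow> 'k::ab_group_add) \<Rightarrow> bool" where
  "cocycle2 br w \<longleftrightarrow>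
     (\<forall>a b. w a b = - w b a) \<and>
     (\<forall>a b c. w (br a b) c + w (br b c) a + w (br c a) b
              = ad_star br a (w b c) + ad_star br b (w c a) + ad_star br c (w a b))"

definition tstar_carrier :: "('k::field \<Rightarrow> 'b::ab_group_add \<Rightarrow> 'b) \<Rightarrow> ('b \<times> ('b \<Rightarrow> 'k)) set" where
  "tstar_carrier scale = UNIV \<times> dual_space scale"

definition tstar_bracket :: "('b \<Rightarrow> 'b \<Rightarrow> 'b) \<Rightarrow> ('b \<Rightarrow> 'b \<Rightarrow> 'b \<Rightarrow> 'k::ab_group_add)
     \<Rightarrow> 'b \<times> ('b \<Rightarrow> 'k) \<Rightarrow> 'b \<times> ('b \<Rightarrow> 'k) \<Rightarrow> 'b \<times> ('b \<Rightarrow> 'k)" where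
  "tstar_bracket br w x y =
     (br (fst x) (fst y), w (fst x) (fst y) + ad_star br (fst x) (snd y) - ad_star br (fst y) (snd x))"

definition q_form :: "'b \<times> ('b \<Rightarrow> 'k::plus) \<Rightarrow> 'b \<times> ('b \<Rightarrow> 'k) \<Rightarrow> 'k" where
  "q_form x y = snd x (fst y) + snd y (fst x)"

definition lie_prod :: "('k::field \<Rightarrow> 'v::ab_group_add \<Rightarrow> 'v) \<Rightarrow> ('v \<Rightarrow> 'v \<Rightarrow> 'v) \<Rightarrow> 'v set \<Rightarrow> 'v set \<Rightarrow> 'v set" where
  "lie_prod sc brk A C = module.span sc {brk x y | x y. x \<in> A \<and> y \<in> C}"

definition lie_center :: "('v \<Rightarrow> 'v \<Rightarrow> 'v::zero) \<Rightarrow> 'v set \<Rightarrow> 'v set" where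
  "lie_center brk L = {x \<in> L. \<forall>y \<in> L. brk x y = 0}"

definition lie_reduced :: "('k::field \<Rightarrow> 'v::ab_group_add \<Rightarrow> 'v) \<Rightarrow> ('v \<Rightarrow> 'v \<Rightarrow> 'v) \<Rightarrow> 'v set \<Rightarrow> bool" where
  "lie_reduced sc brk L \<longleftrightarrow> lie_center brk L \<subseteq> lie_prod sc brk L L"

definition two_step_nilpotent :: "('k::field \<Rightarrow> 'v::ab_group_add \<Rightarrow> 'v) \<Rightarrow> ('v \<Rightarrow> 'v \<Rightarrow> 'v) \<Rightarrow> 'v set \<Rightarrow> bool" where
  "two_step_nilpotent sc brk L \<longleftrightarrow>
     lie_prod sc brk L (lie_prod sc brk L L) = {0} \<and> lie_prod sc brk L L \<noteq> {0}"

end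

(* For abelian B the bracket of T*_w B is [(a, alpha), (b, beta)] = (0, w a b): the coadjoint
   terms are the constants -beta 0 and -alpha 0, which vanish since functionals are linear.
   Hence [T, T] = 0 x W with W = span {w a b}, the centre is rad w x B*, and [T, [T, T]] = 0.
   By cyclicity w a b c = w c a b, so the common kernel of the functionals in W is rad w.
   If rad w = 0, the finitely many w e e' with e, e' in a basis already separate the points of B,
   and finitely many functionals that separate points span B*: evaluation at them embeds B
   linearly into k^G, and a linear left inverse of this embedding writes every functional in
   their coordinates. Conversely, for nonzero c in rad w, a functional not vanishing at c is not
   in W. *)

theory Submission
  imports Defs
begin

section \<open>Linear functionals\<close>

lemma vector_space_mult: "vector_space ((*) :: 'k::field \<Rightarrow> 'k \<Rightarrow> 'k)"
  by unfold_locales (auto simp: algebra_simps)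

lemma vector_space_fscale: "vector_space (fscale :: 'k::field \<Rightarrow> ('a \<Rightarrow> 'k) \<Rightarrow> ('a \<Rightarrow> 'k))"
  by unfold_locales (auto simp: fscale_def fun_eq_iff algebra_simps)

lemma vector_space_pscale:
  assumes "vector_space scale"
  shows "vector_space (pscale scale)"
proof -
  interpret vector_space scale by fact
  show ?thesis
    by unfold_locales
      (auto simp: pscale_def fscale_def algebra_simps scale_right_distrib scale_left_distrib)
qed

lemma vector_space_pair_dual:
  assumes "vector_space scale"
  shows "vector_space_pair scale ((*) :: 'k::field \<Rightarrow> 'k \<Rightarrow> 'k)"
  using assms vector_space_mult by (simp add: vector_space_pair_def)

lemma sum_apply: "(\<Sum>x\<in>A. f x) y = (\<Sum>x\<in>A. f x y)"
  by (induction A rule: infinite_finite_induct) auto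

lemma dual_space_zero:
  assumes "f \<in> dual_space scale"
  shows "f 0 = 0"
proof -
  interpret Vector_Spaces.linear scale "(*)" f
    using assms by (simp add: dual_space_def)
  show ?thesis by (rule zero)
qed

lemma zero_in_dual_space: "vector_space scale \<Longrightarrow> 0 \<in> dual_space scale"
  using vector_space_pair.linear_zero[OF vector_space_pair_dual]
  by (simp add: dual_space_def zero_fun_def)

lemma subspace_dual_space:
  assumes "vector_space scale"
  shows "module.subspace fscale (dual_space (scale :: 'k::field \<Rightarrow> 'b::ab_group_add \<Rightarrow> 'b))"
proof -
  interpret vector_space_pair scale "(*) :: 'k \<Rightarrow> 'k \<Rightarrow> 'k"
    by (rule vector_space_pair_dual) fact
  interpret F: vector_space "fscale :: 'k \<Rightarrow> ('b \<Rightarrow> 'k) \<Rightarrow> _" by (rule vector_space_fscale)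
  show ?thesis
    using linear_zero linear_compose_add linear_compose_scale_right
    by (intro F.subspaceI) (auto simp: dual_space_def fscale_def zero_fun_def plus_fun_def)
qed

lemma dual_space_separates_points:
  fixes scale :: "'k::field \<Rightarrow> 'b::ab_group_add \<Rightarrow> 'b"
  assumes "vector_space scale" and "c \<noteq> 0"
  shows "\<exists>f\<in>dual_space scale. f c \<noteq> 0"
proof -
  interpret vector_space_pair scale "(*) :: 'k \<Rightarrow> 'k \<Rightarrow> 'k"
    by (rule vector_space_pair_dual) fact
  have indep: "vs1.independent {c}"
    using \<open>c \<noteq> 0\<close> by (simp add: vs1.independent_insert vs1.independent_empty)
  have "construct {c} (\<lambda>_. 1) \<in> dual_space scale"
    using linear_construct[OF indep] by (simp add: dual_space_def)
  moreover have "construct {c} (\<lambda>_. 1) c = 1"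
    using construct_basis[OF indep] by simp
  ultimately show ?thesis by force
qed

(* The function (\<lambda>g. if g \<in> G then g c else 0) encodes the tuple (g c) indexed by G inside the
   space of all functions on B*. *)
lemma evaluation_left_inverse:
  fixes scale :: "'k::field \<Rightarrow> 'b::ab_group_add \<Rightarrow> 'b" and G :: "('b \<Rightarrow> 'k) set"
  assumes "vector_space scale" and "G \<subseteq> dual_space scale"
    and separating: "\<And>c. (\<forall>g\<in>G. g c = 0) \<Longrightarrow> c = 0"
  obtains L where "Vector_Spaces.linear fscale scale L"
    and "\<And>c. L (\<lambda>g. if g \<in> G then g c else 0) = c"
proof -
  interpret vector_space_pair scale "fscale :: 'k \<Rightarrow> (('b \<Rightarrow> 'k) \<Rightarrow> 'k) \<Rightarrow> _"
    using assms(1) vector_space_fscale by (simp add: vector_space_pair_def)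
  define ev :: "'b \<Rightarrow> ('b \<Rightarrow> 'k) \<Rightarrow> 'k" where "ev c = (\<lambda>g. if g \<in> G then g c else 0)" for c
  have G_linear: "g (u + v) = g u + g v" "g (scale a u) = a * g u" if "g \<in> G" for g u v a
    using that assms(2) by (auto simp: dual_space_def linear_iff)
  have ev_linear: "Vector_Spaces.linear scale fscale ev"
    using assms(1) vector_space_fscale G_linear
    by (auto simp: linear_iff ev_def fscale_def fun_eq_iff)
  moreover have "inj ev"
  proof (subst linear_inj_iff_eq_0[OF ev_linear], intro allI impI)
    fix c assume "ev c = 0"
    then have "ev c g = 0" for g by simp
    then have "g c = 0" if "g \<in> G" for g
      using that by (metis ev_def)
    then show "c = 0" by (rule separating[rule_format])
  qed
  ultimately obtain L where L: "Vector_Spaces.linear fscale scale L" "L \<circ> ev = id"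
    using linear_injective_left_inverse by blast
  show ?thesis
  proof (rule that[OF L(1)])
    show "L (\<lambda>g. if g \<in> G then g c else 0) = c" for c
      using pointfree_idE[OF L(2), of c] by (simp add: ev_def)
  qed
qed

lemma dual_space_subset_span_if_separating:
  fixes scale :: "'k::field \<Rightarrow> 'b::ab_group_add \<Rightarrow> 'b" and G :: "('b \<Rightarrow> 'k) set"
  assumes "vector_space scale" and "finite G" and "G \<subseteq> dual_space scale"
    and "\<And>c. (\<forall>g\<in>G. g c = 0) \<Longrightarrow> c = 0"
  shows "dual_space scale \<subseteq> module.span fscale G"
proof
  fix f assume f: "f \<in> dual_space scale"
  interpret F: vector_space "fscale :: 'k \<Rightarrow> ('b \<Rightarrow> 'k) \<Rightarrow> _"
    by (rule vector_space_fscale)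
  interpret D: vector_space_pair "fscale :: 'k \<Rightarrow> (('b \<Rightarrow> 'k) \<Rightarrow> 'k) \<Rightarrow> _" "(*)"
    using vector_space_fscale vector_space_mult by (simp add: vector_space_pair_def)
  obtain L where L: "Vector_Spaces.linear fscale scale L"
    and L_ev: "\<And>c. L (\<lambda>g. if g \<in> G then g c else 0) = c"
    using evaluation_left_inverse[OF assms(1,3,4)] by blast
  define \<delta> :: "('b \<Rightarrow> 'k) \<Rightarrow> ('b \<Rightarrow> 'k) \<Rightarrow> 'k" where "\<delta> g = (\<lambda>h. if h = g then 1 else 0)" for g
  have ev_expansion: "(\<lambda>g. if g \<in> G then g c else 0) = (\<Sum>g\<in>G. fscale (g c) (\<delta> g))" for c
  proof
    fix h
    have "(\<Sum>g\<in>G. fscale (g c) (\<delta> g)) h = (\<Sum>g\<in>G. if h = g then g c else 0)"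
      unfolding sum_apply by (intro sum.cong) (auto simp: fscale_def \<delta>_def)
    then show "(if h \<in> G then h c else 0) = (\<Sum>g\<in>G. fscale (g c) (\<delta> g)) h"
      using \<open>finite G\<close> by (simp add: sum.delta)
  qed
  have fL_linear: "Vector_Spaces.linear fscale (*) (f \<circ> L)"
    using Vector_Spaces.linear_compose[OF L] f by (simp add: dual_space_def)
  have "f c = (\<Sum>g\<in>G. fscale (f (L (\<delta> g))) g) c" for c
  proof -
    have "f c = (f \<circ> L) (\<Sum>g\<in>G. fscale (g c) (\<delta> g))"
      using L_ev[of c] unfolding ev_expansion by simp
    also have "\<dots> = (\<Sum>g\<in>G. g c * (f \<circ> L) (\<delta> g))"
      unfolding D.linear_sum[OF fL_linear] D.linear_scale[OF fL_linear] ..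
    also have "\<dots> = (\<Sum>g\<in>G. fscale (f (L (\<delta> g))) g) c"
      by (simp add: sum_apply fscale_def mult.commute)
    finally show ?thesis .
  qed
  then have f_combination: "f = (\<Sum>g\<in>G. fscale (f (L (\<delta> g))) g)" ..
  show "f \<in> F.span G"
    by (subst f_combination, intro F.span_sum F.span_scale) (rule F.span_base)
qed

lemma span_zero_times:
  assumes "vector_space scale"
  shows "module.span (pscale scale) ({0} \<times> S) = {0} \<times> module.span (fscale :: 'k::field \<Rightarrow> _) S"
proof -
  interpret V: vector_space scale by fact
  interpret P: vector_space "pscale scale" by (rule vector_space_pscale) fact
  interpret F: vector_space "fscale :: 'k \<Rightarrow> ('b \<Rightarrow> 'k) \<Rightarrow> _" by (rule vector_space_fscale)
  have "P.span ({0} \<times> S) \<subseteq> {0} \<times> F.span S"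
  proof (rule P.span_minimal)
    show "P.subspace ({0} \<times> F.span S)"
      by (rule P.subspaceI) (auto simp: pscale_def zero_prod_def F.span_zero F.span_add F.span_scale)
  qed (use F.span_base in auto)
  moreover have "F.span S \<subseteq> {f. (0, f) \<in> P.span ({0} \<times> S)}"
  proof (rule F.span_minimal)
    show "F.subspace {f. (0, f) \<in> P.span ({0} \<times> S)}"
      using P.span_zero P.span_add[of "(0, _)" _ "(0, _)"] P.span_scale[of "(0, _)" _ ]
      by (intro F.subspaceI) (auto simp: pscale_def zero_prod_def)
  qed (use P.span_base in auto)
  ultimately show ?thesis by auto
qed

lemma span_eval_eq_0:
  assumes "\<forall>g\<in>S. g c = 0" and "f \<in> module.span (fscale :: 'k::field \<Rightarrow> _) S"
  shows "f c = 0"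
proof -
  interpret F: vector_space "fscale :: 'k \<Rightarrow> ('b \<Rightarrow> 'k) \<Rightarrow> _" by (rule vector_space_fscale)
  have "F.span S \<subseteq> {f. f c = 0}"
    using assms(1) by (intro F.span_minimal F.subspaceI) (auto simp: fscale_def)
  with assms(2) show ?thesis by auto
qed


section \<open>Cyclic bilinear maps into the dual\<close>

lemma bilinear_dual_zero:
  assumes "bilinear_dual scale w"
  shows "w 0 b = 0" and "w a 0 = 0"
proof -
  have "w 0 b c = 0" "w a 0 c = 0" for a b c
    using assms dual_space_zero[of "\<lambda>a. w a b c" scale] dual_space_zero[of "\<lambda>b. w a b c" scale]
    by (simp_all add: bilinear_dual_def dual_space_def)
  then show "w 0 b = 0" and "w a 0 = 0"
    by (simp_all add: fun_eq_iff)
qed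

lemma span_bilinear_dual_values_subset:
  fixes scale :: "'k::field \<Rightarrow> 'b::ab_group_add \<Rightarrow> 'b"
  assumes "vector_space scale" and "bilinear_dual scale w"
  shows "module.span fscale {w a b | a b. True} \<subseteq> dual_space scale"
proof -
  interpret F: vector_space "fscale :: 'k \<Rightarrow> ('b \<Rightarrow> 'k) \<Rightarrow> _" by (rule vector_space_fscale)
  show ?thesis
    using assms(2) unfolding bilinear_dual_def
    by (intro F.span_minimal subspace_dual_space[OF assms(1)]) auto
qed

lemma bilinear_dual_eq_0_on_Basis:
  fixes scale :: "'k::field \<Rightarrow> 'b::ab_group_add \<Rightarrow> 'b"
  assumes "vector_space scale" and "module.span scale Basis = UNIV" and "bilinear_dual scale w"
    and "\<forall>e\<in>Basis. \<forall>e'\<in>Basis. w e e' c = 0"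
  shows "w a b c = 0"
proof -
  interpret vector_space_pair scale "(*) :: 'k \<Rightarrow> 'k \<Rightarrow> 'k"
    by (rule vector_space_pair_dual) fact
  have lin1: "Vector_Spaces.linear scale (*) (\<lambda>a. w a b c)" for b
    using assms(3) by (simp add: bilinear_dual_def)
  have lin2: "Vector_Spaces.linear scale (*) (\<lambda>b. w a b c)" for a
    using assms(3) by (simp add: bilinear_dual_def)
  have "w a e' c = 0" if "e' \<in> Basis" for e'
    by (rule linear_eq_0_on_span[OF lin1, of Basis]) (use assms(2,4) that in auto)
  then show ?thesis
    by (rule linear_eq_0_on_span[OF lin2, of Basis]) (use assms(2) in auto)
qed

lemma rad_iff_cyclic:
  assumes "cyclic w"
  shows "c \<in> rad w \<longleftrightarrow> (\<forall>a b. w a b c = 0)"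
  using assms by (auto simp: rad_def cyclic_def fun_eq_iff)

lemma dual_space_subset_span_if_nondegenerate:
  fixes scale :: "'k::field \<Rightarrow> 'b::ab_group_add \<Rightarrow> 'b"
  assumes fd: "finite_dimensional_vector_space scale Basis"
    and bil: "bilinear_dual scale w" and cyc: "cyclic w" and "nondegenerate w"
  shows "dual_space scale \<subseteq> module.span fscale {w a b | a b. True}" (is "_ \<subseteq> ?W")
proof -
  interpret finite_dimensional_vector_space scale Basis by (rule fd)
  interpret F: vector_space "fscale :: 'k \<Rightarrow> ('b \<Rightarrow> 'k) \<Rightarrow> _" by (rule vector_space_fscale)
  have vs: "vector_space scale" by unfold_locales
  let ?G = "(\<lambda>(e, e'). w e e') ` (Basis \<times> Basis)"
  have "?G \<subseteq> ?W"
    by (intro subsetI F.span_base) auto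
  then have "F.span ?G \<subseteq> ?W"
    by (rule F.span_minimal[OF _ F.subspace_span])
  moreover have "dual_space scale \<subseteq> F.span ?G"
  proof (rule dual_space_subset_span_if_separating[OF vs])
    show "?G \<subseteq> dual_space scale" using bil by (auto simp: bilinear_dual_def)
    fix c assume "\<forall>g\<in>?G. g c = 0"
    then have "w a b c = 0" for a b
      by (intro bilinear_dual_eq_0_on_Basis[OF vs span_Basis bil]) auto
    then have "c \<in> rad w" by (simp add: rad_iff_cyclic[OF cyc])
    with \<open>nondegenerate w\<close> show "c = 0" by (simp add: nondegenerate_def)
  qed (use finite_Basis in simp)
  ultimately show ?thesis by (rule order_trans[rotated])
qed

lemma nondegenerate_if_dual_space_eq_span:
  assumes "vector_space scale" and "bilinear_dual scale w" and cyc: "cyclic w"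
    and dual_eq: "dual_space scale = module.span fscale {w a b | a b. True}"
  shows "nondegenerate w"
proof -
  have "c = 0" if "c \<in> rad w" for c
  proof (rule ccontr)
    assume "c \<noteq> 0"
    then obtain f where f: "f \<in> module.span fscale {w a b | a b. True}" and "f c \<noteq> 0"
      using dual_space_separates_points[OF assms(1)] unfolding dual_eq by blast
    have "\<forall>g\<in>{w a b | a b. True}. g c = 0"
      using \<open>c \<in> rad w\<close> by (auto simp: rad_iff_cyclic[OF cyc])
    then have "f c = 0"
      using f by (rule span_eval_eq_0)
    with \<open>f c \<noteq> 0\<close> show False by simp
  qed
  moreover have "0 \<in> rad w" by (simp add: rad_def bilinear_dual_zero[OF assms(2)])
  ultimately show ?thesis
    unfolding nondegenerate_def by blast
qed

theorem nondegenerate_iff_dual_space_eq_span: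
  fixes scale :: "'k::field \<Rightarrow> 'b::ab_group_add \<Rightarrow> 'b"
  assumes fd: "finite_dimensional_vector_space scale Basis"
    and bil: "bilinear_dual scale w" and cyc: "cyclic w"
  shows "nondegenerate w \<longleftrightarrow> dual_space scale = module.span fscale {w a b | a b. True}"
proof -
  have vs: "vector_space scale"
    using fd by (simp add: finite_dimensional_vector_space_def)
  show ?thesis
    using dual_space_subset_span_if_nondegenerate[OF fd bil cyc]
      span_bilinear_dual_values_subset[OF vs bil] nondegenerate_if_dual_space_eq_span[OF vs bil cyc]
    by blast
qed


section \<open>The \<open>T\<^sup>*\<close>-extension of an abelian Lie algebra\<close>

lemma tstar_bracket_abelian:
  assumes "x \<in> tstar_carrier scale" and "y \<in> tstar_carrier scale"
  shows "tstar_bracket (\<lambda>_ _. 0) w x y = (0, w (fst x) (fst y))"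
  using assms dual_space_zero[of "snd x" scale] dual_space_zero[of "snd y" scale]
  by (simp add: tstar_bracket_def ad_star_def tstar_carrier_def mem_Times_iff zero_fun_def)

lemma lie_prod_tstar_abelian:
  fixes scale :: "'k::field \<Rightarrow> 'b::ab_group_add \<Rightarrow> 'b"
  assumes "vector_space scale"
  shows "lie_prod (pscale scale) (tstar_bracket (\<lambda>_ _. 0) w) (tstar_carrier scale) (tstar_carrier scale)
    = {0} \<times> module.span fscale {w a b | a b. True}"
proof -
  have "{tstar_bracket (\<lambda>_ _. 0) w x y | x y. x \<in> tstar_carrier scale \<and> y \<in> tstar_carrier scale}
    = {0::'b} \<times> {w a b | a b. True}"
  proof (intro equalityI subsetI)
    fix z
    assume "z \<in> {tstar_bracket (\<lambda>_ _. 0) w x y | x y. x \<in> tstar_carrier scale \<and> y \<in> tstar_carrier scale}"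
    then show "z \<in> {0::'b} \<times> {w a b | a b. True}"
      using tstar_bracket_abelian by fastforce
  next
    fix z assume "z \<in> {0::'b} \<times> {w a b | a b. True}"
    then obtain a b where z: "z = (0, w a b)" by blast
    have ab: "(a, 0) \<in> tstar_carrier scale" "(b, 0) \<in> tstar_carrier scale"
      using zero_in_dual_space[OF assms] by (auto simp: tstar_carrier_def)
    then have "z = tstar_bracket (\<lambda>_ _. 0) w (a, 0) (b, 0)"
      using z by (simp add: tstar_bracket_abelian)
    with ab show
      "z \<in> {tstar_bracket (\<lambda>_ _. 0) w x y | x y. x \<in> tstar_carrier scale \<and> y \<in> tstar_carrier scale}"
      unfolding mem_Collect_eq by (intro exI conjI)
  qed
  then show ?thesis
    unfolding lie_prod_def by (simp add: span_zero_times[OF assms])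
qed

lemma lie_center_tstar_abelian:
  assumes "vector_space scale"
  shows "lie_center (tstar_bracket (\<lambda>_ _. 0) w) (tstar_carrier scale) = rad w \<times> dual_space scale"
proof -
  have "(\<forall>y \<in> tstar_carrier scale. tstar_bracket (\<lambda>_ _. 0) w x y = 0) \<longleftrightarrow> fst x \<in> rad w"
    if "x \<in> tstar_carrier scale" for x
  proof -
    have "(\<forall>y \<in> tstar_carrier scale. tstar_bracket (\<lambda>_ _. 0) w x y = 0)
        \<longleftrightarrow> (\<forall>y \<in> tstar_carrier scale. w (fst x) (fst y) = 0)"
      using that by (simp add: tstar_bracket_abelian zero_prod_def)
    also have "\<dots> \<longleftrightarrow> (\<forall>b. w (fst x) b = 0)"
      using zero_in_dual_space[OF assms] by (auto simp: tstar_carrier_def)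
    finally show ?thesis by (simp add: rad_def)
  qed
  then have "lie_center (tstar_bracket (\<lambda>_ _. 0) w) (tstar_carrier scale)
      = {x \<in> tstar_carrier scale. fst x \<in> rad w}"
    unfolding lie_center_def by blast
  then show ?thesis
    by (auto simp: tstar_carrier_def)
qed

lemma two_step_nilpotent_tstar_abelian_iff:
  fixes scale :: "'k::field \<Rightarrow> 'b::ab_group_add \<Rightarrow> 'b"
  assumes "vector_space scale" and "bilinear_dual scale w"
  shows "two_step_nilpotent (pscale scale) (tstar_bracket (\<lambda>_ _. 0) w) (tstar_carrier scale)
    \<longleftrightarrow> w \<noteq> (\<lambda>_ _. 0)"
proof -
  interpret P: vector_space "pscale scale" by (rule vector_space_pscale) fact
  interpret F: vector_space "fscale :: 'k \<Rightarrow> ('b \<Rightarrow> 'k) \<Rightarrow> _" by (rule vector_space_fscale)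
  let ?T = "tstar_carrier scale" and ?W = "F.span {w a b | a b. True}"
  let ?br = "tstar_bracket (\<lambda>_ _. 0) w"
  have "?br x y = 0" if "x \<in> ?T" and "y \<in> {0} \<times> ?W" for x y
  proof -
    have "y \<in> ?T"
      using that(2) span_bilinear_dual_values_subset[OF assms] by (auto simp: tstar_carrier_def)
    with that show ?thesis
      by (auto simp: tstar_bracket_abelian bilinear_dual_zero[OF assms(2)] zero_prod_def)
  qed
  then have "{?br x y | x y. x \<in> ?T \<and> y \<in> {0} \<times> ?W} \<subseteq> {0}"
    by blast
  then have "P.span {?br x y | x y. x \<in> ?T \<and> y \<in> {0} \<times> ?W} \<subseteq> P.span {0}"
    by (rule P.span_mono)
  then have "P.span {?br x y | x y. x \<in> ?T \<and> y \<in> {0} \<times> ?W} = {0}"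
    using P.span_zero by auto
  moreover have "?W = {0} \<longleftrightarrow> w = (\<lambda>_ _. 0)"
  proof
    assume "?W = {0}"
    have "w a b \<in> ?W" for a b by (rule F.span_base) blast
    with \<open>?W = {0}\<close> have "w a b = 0" for a b by simp
    then show "w = (\<lambda>_ _. 0)" by (simp add: fun_eq_iff)
  next
    assume "w = (\<lambda>_ _. 0)"
    then have "{w a b | a b. True} = {0}" by (simp add: zero_fun_def)
    then show "?W = {0}" by simp
  qed
  moreover have "{0::'b} \<times> A = {0} \<longleftrightarrow> A = {0}" for A :: "('b \<Rightarrow> 'k) set"
    by (auto simp: zero_prod_def)
  ultimately show ?thesis
    unfolding two_step_nilpotent_def lie_prod_tstar_abelian[OF assms(1)]
    by (simp add: lie_prod_def)
qed

lemma lie_reduced_tstar_abelian_iff: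
  fixes scale :: "'k::field \<Rightarrow> 'b::ab_group_add \<Rightarrow> 'b"
  assumes fd: "finite_dimensional_vector_space scale Basis"
    and bil: "bilinear_dual scale w" and cyc: "cyclic w"
  shows "lie_reduced (pscale scale) (tstar_bracket (\<lambda>_ _. 0) w) (tstar_carrier scale)
    \<longleftrightarrow> nondegenerate w"
proof -
  have vs: "vector_space scale"
    using fd by (simp add: finite_dimensional_vector_space_def)
  have "0 \<in> rad w" by (simp add: rad_def bilinear_dual_zero[OF bil])
  moreover have "0 \<in> dual_space scale" by (rule zero_in_dual_space[OF vs])
  ultimately have "rad w \<times> dual_space scale \<subseteq> {0} \<times> module.span fscale {w a b | a b. True}
    \<longleftrightarrow> rad w = {0} \<and> dual_space scale \<subseteq> module.span fscale {w a b | a b. True}"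
    by blast
  then show ?thesis
    using nondegenerate_iff_dual_space_eq_span[OF fd bil cyc] span_bilinear_dual_values_subset[OF vs bil]
    unfolding lie_reduced_def lie_prod_tstar_abelian[OF vs] lie_center_tstar_abelian[OF vs]
      nondegenerate_def
    by blast
qed

theorem corollary2p23:
  fixes scale :: "'k::field_char_0 \<Rightarrow> 'b::ab_group_add \<Rightarrow> 'b"
    and Basis :: "'b set"
    and w :: "'b \<Rightarrow> 'b \<Rightarrow> 'b \<Rightarrow> 'k"
  defines "br \<equiv> (\<lambda>(_::'b) (_::'b). (0::'b))"
  defines "T \<equiv> tstar_carrier scale"
    and "brT \<equiv> tstar_bracket br w"
    and "scT \<equiv> pscale scale"
    and "W \<equiv> module.span fscale {w b b' | b b'. True}"
  assumes fd: "finite_dimensional_vector_space scale Basis"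
    and bil: "bilinear_dual scale w"
    and cyc: "cyclic w"
    and coc: "cocycle2 br w"
  shows "lie_prod scT brT T T = {0} \<times> W \<and>
         lie_center brT T = rad w \<times> dual_space scale \<and>
         (two_step_nilpotent scT brT T \<longleftrightarrow> w \<noteq> (\<lambda>_ _. 0)) \<and>
         (lie_reduced scT brT T \<longleftrightarrow> nondegenerate w) \<and>
         (nondegenerate w \<longleftrightarrow> dual_space scale = W)"
proof -
  have vs: "vector_space scale"
    using fd by (simp add: finite_dimensional_vector_space_def)
  show ?thesis
    unfolding br_def T_def brT_def scT_def W_def
    by (intro conjI lie_prod_tstar_abelian[OF vs] lie_center_tstar_abelian[OF vs]
        two_step_nilpotent_tstar_abelian_iff[OF vs bil] lie_reduced_tstar_abelian_iff[OF fd bil cyc]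
        nondegenerate_iff_dual_space_eq_span[OF fd bil cyc])
qed

end
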